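(* Let $k\geq 1$ be an integer and let $G$ be a graph of order $n$. If \[ \mu(G)>\frac{k-1}{2}+\sqrt{kn+\frac{(k+1)^2}{4}}, \] then $G$ contains $C_{2k+1}$ or $C_{2k+2}$ as a subgraph.
   Context: All graphs are finite and simple. $\mu(G)$ denotes the largest eigenvalue of the adjacency matrix of $G$. $C_r$ denotes the cycle on $r$ vertices. *)

theory Defs
  imports "HOL-Analysis.Analysis"
begin

text \<open>A finite simple graph whose vertex set is the finite type 'a
  (so its order is CARD('a)), given by a symmetric irreflexive adjacency relation.\<close>
definition simple_graph :: "('a::finite \<Rightarrow> 'a \<Rightarrow> bool) \<Rightarrow> bool" where
  "simple_graph E \<longleftrightarrow> (\<forall>u v. E u v \<longrightarrow> E v u) \<and> (\<forall>v. \<not> E v v)"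

definition adj_matrix :: "('a::finite \<Rightarrow> 'a \<Rightarrow> bool) \<Rightarrow> real^'a^'a" where
  "adj_matrix E = (\<chi> i j. if E i j then 1 else 0)"

text \<open>Eigenvalues of a real square matrix (all eigenvalues of a real symmetric
  matrix, such as an adjacency matrix, are real).\<close>
definition is_eigenvalue :: "real^'n^'n \<Rightarrow> real \<Rightarrow> bool" where
  "is_eigenvalue A l \<longleftrightarrow> (\<exists>x. x \<noteq> 0 \<and> A *v x = l *\<^sub>R x)"

definition spectral_radius_graph :: "('a::finite \<Rightarrow> 'a \<Rightarrow> bool) \<Rightarrow> real" where
  "spectral_radius_graph E = Max {l. is_eigenvalue (adj_matrix E) l}"

definition contains_cycle :: "('a \<Rightarrow> 'a \<Rightarrow> bool) \<Rightarrow> nat \<Rightarrow> bool" where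
  "contains_cycle E r \<longleftrightarrow> (\<exists>vs. length vs = r \<and> distinct vs \<and>
      (\<forall>i<r. E (vs ! i) (vs ! ((i + 1) mod r))))"

end

theory Submission
  imports Defs
begin

text \<open>Fix a vertex \<open>u\<close> with neighbourhood \<open>N\<close>. A path on \<open>2k\<close> vertices inside \<open>N\<close> closes
  through \<open>u\<close> to a cycle of length \<open>2k + 1\<close>; a path on at least \<open>2k\<close> vertices of \<open>G - u\<close> that
  starts and ends in \<open>N\<close> and only uses edges meeting \<open>N\<close> closes through \<open>u\<close> to a cycle of length
  \<open>2k + 1\<close> or \<open>2k + 2\<close>. An Erd\H{o}s--Gallai type bound for graphs all of whose edges meet a set
  \<open>A\<close> and which have no such long \<open>A\<close>-paths then bounds the edges inside \<open>N\<close> and those leaving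
  \<open>N\<close>, which gives \<open>\<Sum>v\<in>N. d(v) \<le> (k - 1) d(u) + k (n - 1)\<close> for every \<open>u\<close>. With \<open>A\<close> the
  adjacency matrix and \<open>\<one>\<close> the all-ones vector this says \<open>A\<^sup>2 \<one> \<le> (k - 1) A \<one> + k (n - 1) \<one>\<close>
  entrywise; pairing it with a nonnegative eigenvector for the largest eigenvalue \<open>\<mu>\<close> gives
  \<open>\<mu>\<^sup>2 - (k - 1) \<mu> \<le> k (n - 1)\<close>, which contradicts the assumed lower bound on \<open>\<mu>\<close>.\<close>

section \<open>Walks and A-paths\<close>

lemma successively_rev_sym:
  assumes "\<And>x y. h x y \<Longrightarrow> h y x"
  shows "successively h (rev xs) \<longleftrightarrow> successively h xs"
proof -
  have "(\<lambda>x y. h y x) = h"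
    using assms by blast
  then show ?thesis
    by (metis successively_rev)
qed

lemma successively_take: "successively h xs \<Longrightarrow> successively h (take n xs)"
  by (metis append_take_drop_id successively_append_iff)

lemma successively_drop: "successively h xs \<Longrightarrow> successively h (drop n xs)"
  by (metis append_take_drop_id successively_append_iff)

text \<open>In a walk all of whose edges meet \<open>A\<close>, no two consecutive vertices lie outside \<open>A\<close>.\<close>
lemma successively_length_filter_outside:
  assumes "successively h ps" and "\<And>x y. h x y \<Longrightarrow> x \<in> A \<or> y \<in> A"
  shows "2 * length (filter (\<lambda>x. x \<notin> A) ps) + (if ps \<noteq> [] \<and> last ps \<in> A then 1 else 0)
         \<le> length ps + (if ps \<noteq> [] \<and> hd ps \<notin> A then 1 else 0)"
  using assms(1)
proof (induction ps)
  case (Cons x xs)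
  show ?case
  proof (cases xs)
    case (Cons y zs)
    with Cons.prems have "h x y" "successively h xs"
      by auto
    then show ?thesis
      using Cons.IH assms(2) Cons by (auto split: if_splits)
  qed simp
qed simp

definition closed_walk :: "('a \<Rightarrow> 'a \<Rightarrow> bool) \<Rightarrow> 'a list \<Rightarrow> bool" where
  "closed_walk h Z \<longleftrightarrow> Z \<noteq> [] \<and> successively h Z \<and> h (last Z) (hd Z)"

lemma closed_walk_Cons_snoc:
  "M \<noteq> [] \<Longrightarrow> closed_walk h (c # M @ [p])
     \<longleftrightarrow> h c (hd M) \<and> successively h M \<and> h (last M) p \<and> h p c"
  by (auto simp: closed_walk_def successively_append_iff successively_Cons)

lemma closed_walk_rotate1: "closed_walk h Z \<Longrightarrow> closed_walk h (rotate1 Z)"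
proof (cases Z)
  case (Cons x xs)
  then show "closed_walk h Z \<Longrightarrow> ?thesis"
    by (cases "xs = []") (auto simp: closed_walk_def successively_append_iff successively_Cons)
qed simp

lemma closed_walk_rotate: "closed_walk h Z \<Longrightarrow> closed_walk h (rotate n Z)"
  by (induction n) (auto simp: closed_walk_rotate1)

lemma closed_walk_rotate_split:
  assumes Z: "closed_walk h Z" "distinct Z" "3 \<le> length Z" and j: "j < length Z"
  obtains M p where "rotate j Z = Z ! j # M @ [p]" "M \<noteq> []"
    "hd M = Z ! (Suc j mod length Z)" "closed_walk h (Z ! j # M @ [p])"
    "distinct (Z ! j # M @ [p])" "set (Z ! j # M @ [p]) = set Z"
proof -
  define R where "R = rotate j Z"
  have "3 \<le> length R"
    using Z(3) by (simp add: R_def)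
  then obtain a b c rest where "R = a # b # c # rest"
    by (auto simp: numeral_3_eq_3 Suc_le_length_iff)
  then have "R = hd R # butlast (tl R) @ [last R]" "butlast (tl R) \<noteq> []"
    by simp_all
  moreover have "hd R = Z ! j"
    using j unfolding R_def by (subst hd_rotate_conv_nth) auto
  ultimately obtain M p where R: "R = Z ! j # M @ [p]" and "M \<noteq> []"
    by metis
  moreover have "R ! 1 = Z ! (Suc j mod length Z)"
    using Z(3) by (simp add: R_def nth_rotate)
  then have "hd M = Z ! (Suc j mod length Z)"
    using R \<open>M \<noteq> []\<close> by (simp add: hd_conv_nth nth_append)
  ultimately show thesis
    using that closed_walk_rotate[OF Z(1)] Z(2) R
    by (metis R_def distinct_rotate set_rotate)
qed

lemma closed_walk_crossing:
  assumes sym: "\<And>x y. h x y \<Longrightarrow> h y x" and Q: "successively h Q" and i: "Suc i < length Q"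
    and cross: "h (hd Q) (Q ! Suc i)" "h (last Q) (Q ! i)"
  shows "closed_walk h (take (Suc i) Q @ rev (drop (Suc i) Q))"
proof -
  have "successively h (take (Suc i) Q)" "successively h (drop (Suc i) Q)"
    using Q by (simp_all add: successively_take successively_drop)
  moreover have "take (Suc i) Q \<noteq> []" "drop (Suc i) Q \<noteq> []" "hd (take (Suc i) Q) = hd Q"
    using i by auto
  moreover have "last (take (Suc i) Q) = Q ! i" "hd (drop (Suc i) Q) = Q ! Suc i"
    "last (drop (Suc i) Q) = last Q"
    using i by (auto simp: take_Suc_conv_app_nth hd_drop_conv_nth)
  ultimately show ?thesis
    using sym[OF cross(1)] sym[OF cross(2)] unfolding closed_walk_def
    by (auto simp: successively_append_iff successively_rev_sym[OF sym] hd_rev last_rev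
        simp del: successively_rev)
qed

definition degree_in :: "('a \<Rightarrow> 'a \<Rightarrow> bool) \<Rightarrow> 'a set \<Rightarrow> 'a \<Rightarrow> nat" where
  "degree_in h V x = card {y \<in> V. h x y}"

definition A_path :: "('a \<Rightarrow> 'a \<Rightarrow> bool) \<Rightarrow> 'a set \<Rightarrow> 'a set \<Rightarrow> 'a list \<Rightarrow> bool" where
  "A_path h V A ps \<longleftrightarrow>
     ps \<noteq> [] \<and> distinct ps \<and> set ps \<subseteq> V \<and> successively h ps \<and> hd ps \<in> A \<and> last ps \<in> A"

lemma A_path_rev:
  "(\<And>x y. h x y \<Longrightarrow> h y x) \<Longrightarrow> A_path h V A ps \<Longrightarrow> A_path h V A (rev ps)"
  by (auto simp: A_path_def successively_rev_sym hd_rev last_rev simp del: successively_rev)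

lemma A_path_mono: "A_path h V' A ps \<Longrightarrow> V' \<subseteq> V \<Longrightarrow> A_path h V A ps"
  by (auto simp: A_path_def)

lemma A_path_card_outside:
  assumes "A_path h V A ps" and "\<And>x y. h x y \<Longrightarrow> x \<in> A \<or> y \<in> A"
  shows "2 * card (set ps - A) + 1 \<le> length ps"
proof -
  have "distinct (filter (\<lambda>x. x \<notin> A) ps)"
    using assms(1) by (simp add: A_path_def)
  then have "card (set ps - A) = length (filter (\<lambda>x. x \<notin> A) ps)"
    by (metis distinct_card set_filter set_diff_eq)
  then show ?thesis
    using successively_length_filter_outside[of h ps A] assms by (auto simp: A_path_def)
qed

lemma A_path_reroute:
  assumes sym: "\<And>x y. h x y \<Longrightarrow> h y x"
    and P: "A_path h V A ps" and j: "0 < j" "j < length ps" "ps ! (j - 1) \<in> A"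
    and y: "y \<in> V" "y \<notin> set ps" "h (hd ps) y" "h y (ps ! j)"
  shows "A_path h V A (rev (take j ps) @ y # drop j ps)"
proof -
  have ps: "distinct ps" "set ps \<subseteq> V" "successively h ps" "last ps \<in> A"
    using P by (auto simp: A_path_def)
  have take: "take j ps \<noteq> []" "hd (take j ps) = hd ps" "last (take j ps) = ps ! (j - 1)"
    using j by (auto simp: hd_conv_nth take_Suc_conv_app_nth dest!: gr0_implies_Suc)
  have drop: "drop j ps \<noteq> []" "hd (drop j ps) = ps ! j" "last (drop j ps) = last ps"
    using j by (auto simp: hd_drop_conv_nth)
  have "successively h (rev (take j ps))"
    using ps(3) by (simp add: successively_take successively_rev_sym[OF sym] del: successively_rev)
  moreover have "successively h (y # drop j ps)"
    using ps(3) drop y(4) by (simp add: successively_drop successively_Cons)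
  ultimately have "successively h (rev (take j ps) @ y # drop j ps)"
    using take y(3) by (simp add: successively_append_iff last_rev)
  moreover have "distinct (rev (take j ps) @ y # drop j ps)"
    using ps(1) y(2) by (auto simp: set_take_disj_set_drop_if_distinct
        dest: in_set_takeD in_set_dropD)
  moreover have "set (rev (take j ps) @ y # drop j ps) \<subseteq> V"
    using ps(2) y(1) by (auto dest: in_set_takeD in_set_dropD)
  ultimately show ?thesis
    using take drop j(3) ps(4) by (simp add: A_path_def hd_rev)
qed

lemma card_cycle_pred_le:
  assumes "distinct Z"
  shows "card {j. j < length Z \<and> Z ! (Suc j mod length Z) \<in> S} \<le> card (set Z \<inter> S)"
proof (rule card_inj_on_le)
  let ?succ = "\<lambda>j. Suc j mod length Z"
  show "inj_on (\<lambda>j. Z ! ?succ j) {j. j < length Z \<and> Z ! ?succ j \<in> S}"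
  proof (rule inj_onI)
    fix a b
    assume a: "a \<in> {j. j < length Z \<and> Z ! ?succ j \<in> S}" and b: "b \<in> {j. j < length Z \<and> Z ! ?succ j \<in> S}"
      and eq: "Z ! ?succ a = Z ! ?succ b"
    moreover have "?succ a < length Z" "?succ b < length Z"
      using a b by (auto intro: mod_less_divisor)
    ultimately have "?succ a = ?succ b"
      using assms by (simp add: nth_eq_iff_index_eq)
    with a b show "a = b"
      by (auto simp: mod_Suc split: if_splits)
  qed
qed (auto intro!: nth_mem mod_less_divisor)

section \<open>An Erd\H{o}s--Gallai type bound\<close>

locale longest_A_path =
  fixes h :: "'a \<Rightarrow> 'a \<Rightarrow> bool" and V A :: "'a set" and k L :: nat
  assumes adj_sym: "\<And>x y. h x y \<Longrightarrow> h y x"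
    and adj_irrefl: "\<And>x. \<not> h x x"
    and edges_meet_A: "\<And>x y. h x y \<Longrightarrow> x \<in> A \<or> y \<in> A"
    and degree_A: "\<And>x. x \<in> V \<Longrightarrow> x \<in> A \<Longrightarrow> k \<le> degree_in h V x"
    and degree_outside_A: "\<And>x. x \<in> V \<Longrightarrow> x \<notin> A \<Longrightarrow> k + 1 \<le> degree_in h V x"
    and length_A_path_le: "\<And>ps. A_path h V A ps \<Longrightarrow> length ps \<le> L"
    and L_less: "L < 2 * k"
begin

lemma card_outside_longest:
  assumes "A_path h V A ps" "length ps = L"
  shows "card (set ps - A) \<le> k - 1"
  using A_path_card_outside[OF assms(1) edges_meet_A] assms(2) L_less by linarith

lemma neighbour_of_outside_hd_neighbour:
  assumes P: "A_path h V A ps" "length ps = L"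
    and y: "y \<in> V" "y \<notin> set ps" "y \<notin> A" "h (hd ps) y" and z: "z \<in> V" "h y z"
  shows "z = hd ps \<or> (\<exists>i. Suc i < length ps \<and> ps ! i \<notin> A \<and> z = ps ! Suc i)"
proof -
  have z_A: "z \<in> A"
    using edges_meet_A[OF z(2)] y(3) by simp
  have "z \<in> set ps"
  proof (rule ccontr)
    assume "z \<notin> set ps"
    then have "A_path h V A (z # y # ps)"
      using P y z z_A adj_sym[OF y(4)] adj_sym[OF z(2)] adj_irrefl[of y]
      by (auto simp: A_path_def successively_Cons)
    then show False
      using length_A_path_le P(2) by fastforce
  qed
  then obtain j where j: "j < length ps" "ps ! j = z"
    by (auto simp: in_set_conv_nth)
  show ?thesis
  proof (cases j)
    case 0
    then show ?thesis
      using j P(1) by (simp add: A_path_def hd_conv_nth)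
  next
    case (Suc i)
    have "ps ! i \<notin> A"
    proof
      assume "ps ! i \<in> A"
      then have "A_path h V A (rev (take j ps) @ y # drop j ps)"
        using A_path_reroute[OF adj_sym P(1)] Suc j y z adj_sym[OF z(2)] by auto
      then show False
        using length_A_path_le P(2) j by fastforce
    qed
    then show ?thesis
      using Suc j by auto
  qed
qed

lemma hd_neighbour_in_longest:
  assumes P: "A_path h V A ps" "length ps = L" and y: "y \<in> V" "h (hd ps) y"
  shows "y \<in> set ps"
proof (rule ccontr)
  assume y_notin: "y \<notin> set ps"
  have y_A: "y \<notin> A"
  proof
    assume "y \<in> A"
    then have "A_path h V A (y # ps)"
      using P y y_notin adj_sym[OF y(2)] by (auto simp: A_path_def successively_Cons)
    then show False
      using length_A_path_le P(2) by fastforce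
  qed
  define I where "I = {i. Suc i < length ps \<and> ps ! i \<notin> A}"
  have fin_I: "finite I"
    unfolding I_def by (rule finite_subset[of _ "{..<length ps}"]) auto
  have "{z \<in> V. h y z} \<subseteq> insert (hd ps) ((\<lambda>i. ps ! Suc i) ` I)"
    using neighbour_of_outside_hd_neighbour[OF P y(1) y_notin y_A y(2)] unfolding I_def by blast
  then have "degree_in h V y \<le> card (insert (hd ps) ((\<lambda>i. ps ! Suc i) ` I))"
    unfolding degree_in_def using fin_I by (intro card_mono) auto
  also have "\<dots> \<le> Suc (card ((\<lambda>i. ps ! Suc i) ` I))"
    using fin_I by (simp add: card_insert_if)
  also have "\<dots> \<le> Suc (card I)"
    using fin_I by (simp add: card_image_le)
  also have "card I \<le> card (set ps - A)"
  proof (rule card_inj_on_le)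
    show "inj_on (nth ps) I"
      using P(1) by (auto simp: I_def A_path_def inj_on_def nth_eq_iff_index_eq)
  qed (auto simp: I_def)
  finally show False
    using card_outside_longest[OF P] degree_outside_A[OF y(1) y_A] L_less by linarith
qed

lemma last_neighbour_in_longest:
  assumes "A_path h V A ps" "length ps = L" "y \<in> V" "h (last ps) y"
  shows "y \<in> set ps"
  using hd_neighbour_in_longest[OF A_path_rev[OF adj_sym assms(1)]] assms by (auto simp: hd_rev)

lemma card_neighbour_positions_longest:
  assumes Q: "A_path h V A Q" "length Q = L"
  shows "k \<le> card {i. Suc i < L \<and> h (hd Q) (Q ! Suc i)}"
    and "k \<le> card {i. Suc i < L \<and> h (last Q) (Q ! i)}"
proof -
  have Q_facts: "Q \<noteq> []" "hd Q \<in> A" "last Q \<in> A" "hd Q \<in> V" "last Q \<in> V"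
    using Q(1) by (auto simp: A_path_def)
  have fin: "finite {i. Suc i < L \<and> P i}" for P
    by (rule finite_subset[of _ "{..<L}"]) auto
  have "{y \<in> V. h (hd Q) y} \<subseteq> (\<lambda>i. Q ! Suc i) ` {i. Suc i < L \<and> h (hd Q) (Q ! Suc i)}"
  proof
    fix y
    assume y: "y \<in> {y \<in> V. h (hd Q) y}"
    then obtain j where j: "j < L" "Q ! j = y"
      using hd_neighbour_in_longest[OF Q] Q(2) by (auto simp: in_set_conv_nth)
    have "j \<noteq> 0"
      using j y adj_irrefl[of "hd Q"] Q_facts(1) by (metis hd_conv_nth mem_Collect_eq)
    then show "y \<in> (\<lambda>i. Q ! Suc i) ` {i. Suc i < L \<and> h (hd Q) (Q ! Suc i)}"
      using j y by (auto simp: gr0_conv_Suc)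
  qed
  then have "degree_in h V (hd Q) \<le> card {i. Suc i < L \<and> h (hd Q) (Q ! Suc i)}"
    unfolding degree_in_def by (rule surj_card_le[rotated]) (rule fin)
  then show "k \<le> card {i. Suc i < L \<and> h (hd Q) (Q ! Suc i)}"
    using degree_A[OF Q_facts(4,2)] by linarith
  have "{y \<in> V. h (last Q) y} \<subseteq> (\<lambda>i. Q ! i) ` {i. Suc i < L \<and> h (last Q) (Q ! i)}"
  proof
    fix y
    assume y: "y \<in> {y \<in> V. h (last Q) y}"
    then obtain j where j: "j < L" "Q ! j = y"
      using last_neighbour_in_longest[OF Q] Q(2) by (auto simp: in_set_conv_nth)
    have "j \<noteq> L - 1"
      using j y adj_irrefl[of "last Q"] Q_facts(1) Q(2) by (auto simp: last_conv_nth)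
    then show "y \<in> (\<lambda>i. Q ! i) ` {i. Suc i < L \<and> h (last Q) (Q ! i)}"
      using j y by force
  qed
  then have "degree_in h V (last Q) \<le> card {i. Suc i < L \<and> h (last Q) (Q ! i)}"
    unfolding degree_in_def by (rule surj_card_le[rotated]) (rule fin)
  then show "k \<le> card {i. Suc i < L \<and> h (last Q) (Q ! i)}"
    using degree_A[OF Q_facts(5,3)] by linarith
qed

text \<open>Since \<open>L < 2k\<close>, the \<open>\<ge> k\<close> neighbour positions of both ends overlap, so that some \<open>i\<close> has
  the head adjacent to the \<open>(i+1)\<close>-st and the last vertex adjacent to the \<open>i\<close>-th vertex.\<close>
lemma cycle_on_longest:
  assumes Q: "A_path h V A Q" "length Q = L"
  obtains Z where "closed_walk h Z" "distinct Z" "set Z = set Q" "length Z = L" "3 \<le> L"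
proof -
  define I1 where "I1 = {i. Suc i < L \<and> h (hd Q) (Q ! Suc i)}"
  define I2 where "I2 = {i. Suc i < L \<and> h (last Q) (Q ! i)}"
  have I_sub: "I1 \<subseteq> {..<L - 1}" "I2 \<subseteq> {..<L - 1}"
    unfolding I1_def I2_def by auto
  have k_I: "k \<le> card I1" "k \<le> card I2"
    using card_neighbour_positions_longest[OF Q] unfolding I1_def I2_def by auto
  have "card I1 \<le> L - 1"
    using card_mono[OF _ I_sub(1)] by simp
  then have "3 \<le> L"
    using k_I L_less by linarith
  obtain i where "i \<in> I1" "i \<in> I2"
  proof (rule ccontr)
    assume "\<not> thesis"
    then have "card (I1 \<union> I2) = card I1 + card I2"
      using that I_sub by (intro card_Un_disjoint) (auto intro: finite_subset)
    moreover have "card (I1 \<union> I2) \<le> L - 1"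
      using card_mono[of "{..<L - 1}" "I1 \<union> I2"] I_sub by auto
    ultimately show False
      using k_I L_less by linarith
  qed
  then have i: "Suc i < length Q" "h (hd Q) (Q ! Suc i)" "h (last Q) (Q ! i)"
    using Q(2) unfolding I1_def I2_def by auto
  define Z where "Z = take (Suc i) Q @ rev (drop (Suc i) Q)"
  have "closed_walk h Z"
    using Q(1) unfolding Z_def by (auto simp: A_path_def intro!: closed_walk_crossing[OF adj_sym _ i])
  moreover have "set Z = set Q"
    unfolding Z_def by (metis append_take_drop_id set_append set_rev)
  moreover have "distinct Z"
    using Q(1) unfolding Z_def A_path_def
    by (metis append_take_drop_id distinct_append distinct_rev set_rev)
  moreover have "length Z = L"
    using Q(2) i(1) unfolding Z_def by simp
  ultimately show thesis
    using that \<open>3 \<le> L\<close> by blast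
qed

text \<open>Opening the cycle between \<open>c\<close> and a cycle-neighbour in \<open>A\<close> would give another longest
  \<open>A\<close>-path, ending in \<open>c\<close> and hence containing the neighbour \<open>x\<close> of \<open>c\<close>.\<close>
lemma cycle_neighbours_outside_A:
  assumes Q: "A_path h V A Q" "length Q = L"
    and R: "M \<noteq> []" "closed_walk h (c # M @ [p])" "distinct (c # M @ [p])"
      "set (c # M @ [p]) = set Q"
    and c: "c \<in> A" and x: "x \<in> V" "x \<notin> set Q" "h c x"
  shows "hd M \<notin> A" "p \<notin> A"
proof -
  have edges: "h c (hd M)" "successively h M" "h (last M) p" "h p c"
    using R(2) closed_walk_Cons_snoc[OF R(1)] by simp_all
  have "length (c # M @ [p]) = card (set Q)"
    using R(3,4) by (metis distinct_card)
  also have "\<dots> = L"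
    using Q by (simp add: A_path_def distinct_card)
  finally have "length (c # M @ [p]) = L" .
  then have len: "length (M @ [p, c]) = L" "length (p # rev M @ [c]) = L"
    by simp_all
  have V: "set (c # M @ [p]) \<subseteq> V"
    using R(4) Q(1) by (simp add: A_path_def)
  show "hd M \<notin> A"
  proof
    assume "hd M \<in> A"
    then have "A_path h V A (M @ [p, c])"
      using R(1,3) V c edges by (auto simp: A_path_def successively_append_iff)
    then have "x \<in> set (M @ [p, c])"
      using last_neighbour_in_longest[OF _ len(1) x(1)] x(3) by simp
    then show False
      using x(2) R(4) by auto
  qed
  show "p \<notin> A"
  proof
    assume "p \<in> A"
    then have "A_path h V A (p # rev M @ [c])"
      using R(1,3) V c edges adj_sym[OF edges(1)] adj_sym[OF edges(3)]
      by (auto simp: A_path_def successively_append_iff successively_Cons hd_rev last_rev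
          successively_rev_sym[OF adj_sym] simp del: successively_rev)
    then have "x \<in> set (p # rev M @ [c])"
      using last_neighbour_in_longest[OF _ len(2) x(1)] x(3) by simp
    then show False
      using x(2) R(4) by auto
  qed
qed

end

locale longest_A_path_cycle = longest_A_path +
  fixes Q Z :: "'a list"
  assumes longest: "A_path h V A Q" "length Q = L"
    and cycle: "closed_walk h Z" "distinct Z" "set Z = set Q" "length Z = L"
    and three_le_L: "3 \<le> L"
begin

lemma cycle_split_at:
  assumes "j < L"
  obtains M p where "M \<noteq> []" "hd M = Z ! (Suc j mod L)" "closed_walk h (Z ! j # M @ [p])"
    "distinct (Z ! j # M @ [p])" "set (Z ! j # M @ [p]) = set Q" "length (Z ! j # M @ [p]) = L"
proof -
  obtain M p where "rotate j Z = Z ! j # M @ [p]" "M \<noteq> []" "hd M = Z ! (Suc j mod L)"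
    "closed_walk h (Z ! j # M @ [p])" "distinct (Z ! j # M @ [p])" "set (Z ! j # M @ [p]) = set Z"
    using closed_walk_rotate_split[OF cycle(1,2)] cycle(4) three_le_L assms by metis
  then show thesis
    using that cycle(3,4) by (metis length_rotate)
qed

lemma A_neighbour_on_longest:
  assumes c: "c \<in> set Q" and x: "x \<in> V" "x \<in> A" "h c x"
  shows "x \<in> set Q"
proof (rule ccontr)
  assume x_notin: "x \<notin> set Q"
  obtain j where "j < L" "Z ! j = c"
    using c cycle(3,4) by (metis in_set_conv_nth)
  then obtain M p where R: "M \<noteq> []" "closed_walk h (c # M @ [p])" "distinct (c # M @ [p])"
    "set (c # M @ [p]) = set Q" "length (c # M @ [p]) = L"
    using cycle_split_at by metis
  have edges: "h c (hd M)" "successively h M" "h (last M) p"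
    using R(2) closed_walk_Cons_snoc[OF R(1)] by simp_all
  have V: "set (c # M @ [p]) \<subseteq> V"
    using R(4) longest(1) by (simp add: A_path_def)
  have distinct: "distinct (x # c # M @ [p])"
    using R(3,4) x_notin by simp
  have x_c: "h x c"
    using adj_sym[OF x(3)] .
  show False
  proof (cases "p \<in> A")
    case True
    then have "A_path h V A (x # c # M @ [p])"
      using distinct V x R(1) x_c edges
      by (auto simp: A_path_def successively_append_iff successively_Cons)
    then show False
      using length_A_path_le R(5) by fastforce
  next
    case False
    then have "last M \<in> A"
      using edges_meet_A[OF edges(3)] by simp
    then have "A_path h V A (x # c # M)"
      using distinct V x R(1) x_c edges by (auto simp: A_path_def successively_Cons)
    moreover have "length (x # c # M) = L"
      using R(5) by simp
    ultimately have "p \<in> set (x # c # M)"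
      using V edges(3) R(1) by (intro last_neighbour_in_longest) auto
    then show False
      using distinct by auto
  qed
qed

lemma cycle_succ_outside_A:
  assumes x: "x \<in> V" "x \<notin> A" "x \<notin> set Q" and j: "j < L" "h (Z ! j) x"
  shows "Z ! (Suc j mod L) \<notin> A"
proof -
  obtain M p where R: "M \<noteq> []" "hd M = Z ! (Suc j mod L)" "closed_walk h (Z ! j # M @ [p])"
    "distinct (Z ! j # M @ [p])" "set (Z ! j # M @ [p]) = set Q"
    using cycle_split_at[OF j(1)] by metis
  have "Z ! j \<in> A"
    using edges_meet_A[OF j(2)] x(2) by simp
  then show ?thesis
    using cycle_neighbours_outside_A(1)[OF longest R(1,3,4,5) _ x(1,3) j(2)] R(2) by simp
qed

lemma neighbours_on_longest_if_outside_A: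
  assumes c: "c \<in> set Q" and x: "x \<in> V" "x \<notin> A" "x \<notin> set Q" "h c x"
  shows "{z \<in> V. h x z} \<subseteq> set Q"
proof
  fix z
  assume "z \<in> {z \<in> V. h x z}"
  then have z: "z \<in> V" "h x z"
    by auto
  obtain j where "j < L" "Z ! j = c"
    using c cycle(3,4) by (metis in_set_conv_nth)
  then obtain M p where R: "M \<noteq> []" "closed_walk h (c # M @ [p])" "distinct (c # M @ [p])"
    "set (c # M @ [p]) = set Q" "length (c # M @ [p]) = L"
    using cycle_split_at by metis
  have "c \<in> A"
    using edges_meet_A[OF x(4)] x(2) by simp
  then have "p \<notin> A"
    using cycle_neighbours_outside_A(2)[OF longest R(1-4) _ x(1,3,4)] by simp
  moreover have edges: "h c (hd M)" "successively h M" "h (last M) p"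
    using R(2) closed_walk_Cons_snoc[OF R(1)] by simp_all
  ultimately have "last M \<in> A"
    using edges_meet_A by blast
  show "z \<in> set Q"
  proof (rule ccontr)
    assume z_notin: "z \<notin> set Q"
    have "z \<in> A" "z \<noteq> x"
      using z edges_meet_A x(2) adj_irrefl by auto
    moreover have "set (c # M @ [p]) \<subseteq> V"
      using R(4) longest(1) by (simp add: A_path_def)
    ultimately have "A_path h V A (z # x # c # M)"
      using R(1,3,4) z z_notin x edges \<open>last M \<in> A\<close> adj_sym[OF z(2)] adj_sym[OF x(4)]
      by (auto simp: A_path_def successively_Cons)
    then show False
      using length_A_path_le R(5) by fastforce
  qed
qed

text \<open>If \<open>x\<close> were off the path, its \<open>\<ge> k + 1\<close> neighbours, all in \<open>A\<close>, would lie on the cycle, each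
  followed by a cycle vertex outside \<open>A\<close>; but there are at most \<open>k - 1\<close> of those.\<close>
lemma outside_A_neighbour_on_longest:
  assumes c: "c \<in> set Q" and x: "x \<in> V" "x \<notin> A" "h c x"
  shows "x \<in> set Q"
proof (rule ccontr)
  assume x_notin: "x \<notin> set Q"
  define J where "J = {j. j < L \<and> Z ! (Suc j mod L) \<notin> A}"
  have "{z \<in> V. h x z} \<subseteq> (\<lambda>j. Z ! j) ` J"
  proof
    fix z
    assume z: "z \<in> {z \<in> V. h x z}"
    then obtain j where j: "j < L" "Z ! j = z"
      using neighbours_on_longest_if_outside_A[OF c x(1,2) x_notin x(3)] cycle(3,4)
      by (metis in_set_conv_nth subsetD)
    moreover have "h (Z ! j) x"
      using z j(2) adj_sym by blast
    ultimately show "z \<in> (\<lambda>j. Z ! j) ` J"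
      using cycle_succ_outside_A[OF x(1,2) x_notin] unfolding J_def by blast
  qed
  then have "degree_in h V x \<le> card J"
    unfolding degree_in_def by (rule surj_card_le[rotated]) (simp add: J_def)
  also have "\<dots> \<le> card (set Q - A)"
    using card_cycle_pred_le[OF cycle(2), of "- A"] cycle(3,4) by (simp add: J_def Diff_eq)
  also have "\<dots> \<le> k - 1"
    by (rule card_outside_longest[OF longest])
  finally show False
    using degree_outside_A[OF x(1,2)] L_less by linarith
qed

end

lemma (in longest_A_path) neighbour_on_longest:
  assumes Q: "A_path h V A Q" "length Q = L" and x: "c \<in> set Q" "x \<in> V" "h c x"
  shows "x \<in> set Q"
proof -
  obtain Z where "closed_walk h Z" "distinct Z" "set Z = set Q" "length Z = L" "3 \<le> L"
    using cycle_on_longest[OF Q] .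
  then interpret longest_A_path_cycle h V A k L Q Z
    using Q by unfold_locales
  show ?thesis
    using A_neighbour_on_longest outside_A_neighbour_on_longest x by blast
qed

definition degree_sum :: "('a \<Rightarrow> 'a \<Rightarrow> bool) \<Rightarrow> 'a set \<Rightarrow> nat" where
  "degree_sum h V = (\<Sum>x\<in>V. degree_in h V x)"

lemma degree_sum_remove:
  assumes fin: "finite V" and v: "v \<in> V"
    and sym: "\<And>x y. h x y \<Longrightarrow> h y x" and irrefl: "\<And>x. \<not> h x x"
  shows "degree_sum h V = degree_sum h (V - {v}) + 2 * degree_in h V v"
proof -
  have deg: "degree_in h V x = degree_in h (V - {v}) x + (if h x v then 1 else 0)"
    if "x \<in> V - {v}" for x
  proof -
    have "{y \<in> V. h x y} = (if h x v then insert v else id) {y \<in> V - {v}. h x y}"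
      using v by auto
    then show ?thesis
      using fin by (simp add: degree_in_def)
  qed
  have "degree_sum h V = degree_in h V v + (\<Sum>x\<in>V - {v}. degree_in h V x)"
    unfolding degree_sum_def using fin v by (simp add: sum.remove)
  also have "(\<Sum>x\<in>V - {v}. degree_in h V x)
      = degree_sum h (V - {v}) + card {x \<in> V - {v}. h x v}"
    using fin by (simp add: deg degree_sum_def sum.distrib sum.If_cases Int_def)
  also have "{x \<in> V - {v}. h x v} = {y \<in> V. h v y}"
    using sym irrefl by blast
  finally show ?thesis
    by (simp add: degree_in_def)
qed

lemma degree_sum_split:
  assumes fin: "finite V" and W: "W \<subseteq> V"
    and closed: "\<And>x y. x \<in> W \<Longrightarrow> y \<in> V \<Longrightarrow> h x y \<Longrightarrow> y \<in> W"
    and sym: "\<And>x y. h x y \<Longrightarrow> h y x"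
  shows "degree_sum h V = degree_sum h W + degree_sum h (V - W)"
proof -
  have "degree_sum h V = (\<Sum>x\<in>W. degree_in h V x) + (\<Sum>x\<in>V - W. degree_in h V x)"
    unfolding degree_sum_def using fin W by (metis sum.subset_diff add.commute)
  also have "(\<Sum>x\<in>W. degree_in h V x) = degree_sum h W"
    unfolding degree_sum_def degree_in_def
    by (rule sum.cong) (use W closed in \<open>auto intro!: arg_cong[where f = card]\<close>)
  also have "(\<Sum>x\<in>V - W. degree_in h V x) = degree_sum h (V - W)"
    unfolding degree_sum_def degree_in_def
    by (rule sum.cong) (use closed sym in \<open>auto intro!: arg_cong[where f = card]\<close>)
  finally show ?thesis .
qed

lemma degree_sum_le_small:
  assumes fin: "finite W" and card_W: "card W < 2 * k" and irrefl: "\<And>x. \<not> h x x"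
    and edges_meet_A: "\<And>x y. h x y \<Longrightarrow> x \<in> A \<or> y \<in> A"
  shows "degree_sum h W \<le> 2 * (k - 1) * card (W \<inter> A) + 2 * k * card (W - A)"
proof -
  have "degree_sum h W = (\<Sum>x\<in>W \<inter> A. degree_in h W x) + (\<Sum>x\<in>W - A. degree_in h W x)"
    unfolding degree_sum_def using fin by (metis sum.Int_Diff)
  also have "(\<Sum>x\<in>W \<inter> A. degree_in h W x) \<le> (\<Sum>x\<in>W \<inter> A. 2 * (k - 1))"
  proof (rule sum_mono)
    fix x
    assume "x \<in> W \<inter> A"
    then have "degree_in h W x \<le> card (W - {x})"
      unfolding degree_in_def using fin irrefl by (intro card_mono) auto
    then show "degree_in h W x \<le> 2 * (k - 1)"
      using \<open>x \<in> W \<inter> A\<close> card_W fin by simp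
  qed
  also have "(\<Sum>x\<in>W - A. degree_in h W x) \<le> (\<Sum>x\<in>W - A. 2 * k)"
  proof (rule sum_mono)
    fix x
    assume "x \<in> W - A"
    then have "degree_in h W x \<le> card (W \<inter> A)"
      unfolding degree_in_def using fin edges_meet_A by (intro card_mono) auto
    also have "\<dots> \<le> card W"
      using fin by (intro card_mono) auto
    finally show "degree_in h W x \<le> 2 * k"
      using card_W by simp
  qed
  finally show ?thesis
    by (simp add: mult.commute)
qed

lemma longest_A_path_exists:
  assumes "a \<in> V" "a \<in> A" and bounded: "\<And>ps. A_path h V A ps \<Longrightarrow> length ps < B"
  obtains Q where "A_path h V A Q" "\<And>ps. A_path h V A ps \<Longrightarrow> length ps \<le> length Q"
proof -
  have "A_path h V A [a]"
    using assms(1,2) by (simp add: A_path_def)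
  then have "\<exists>Q. A_path h V A Q \<and> (\<forall>ps. A_path h V A ps \<longrightarrow> length ps \<le> length Q)"
    using ex_has_greatest_nat[of "\<lambda>Q. A_path h V A Q" "[a]" length B] bounded by blast
  then show thesis
    using that by blast
qed

text \<open>If all degrees are large, the vertex set of a longest \<open>A\<close>-path is a union of components.\<close>
lemma longest_A_path_splits_off:
  assumes fin: "finite V" and sym: "\<And>x y. h x y \<Longrightarrow> h y x" and irrefl: "\<And>x. \<not> h x x"
    and edges_meet_A: "\<And>x y. h x y \<Longrightarrow> x \<in> A \<or> y \<in> A"
    and degree: "\<And>x. x \<in> V \<Longrightarrow> x \<in> A \<Longrightarrow> k \<le> degree_in h V x"
      "\<And>x. x \<in> V \<Longrightarrow> x \<notin> A \<Longrightarrow> k + 1 \<le> degree_in h V x"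
    and short: "\<And>ps. A_path h V A ps \<Longrightarrow> length ps < 2 * k" and a: "a \<in> V" "a \<in> A"
  obtains W where "W \<subseteq> V" "W \<noteq> {}" "card W < 2 * k"
    "degree_sum h V = degree_sum h W + degree_sum h (V - W)"
proof -
  obtain Q where Q: "A_path h V A Q" "\<And>ps. A_path h V A ps \<Longrightarrow> length ps \<le> length Q"
    using longest_A_path_exists[OF a short] by blast
  interpret longest_A_path h V A k "length Q"
    by unfold_locales (assumption | rule sym irrefl edges_meet_A degree Q(2) short[OF Q(1)])+
  have "set Q \<subseteq> V" "set Q \<noteq> {}" "card (set Q) < 2 * k"
    using Q short by (auto simp: A_path_def distinct_card)
  moreover have "degree_sum h V = degree_sum h (set Q) + degree_sum h (V - set Q)"
    using neighbour_on_longest[OF Q(1) refl] \<open>set Q \<subseteq> V\<close>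
    by (intro degree_sum_split[OF fin _ _ sym]) auto
  ultimately show thesis
    using that by blast
qed

lemma card_Int_Diff_split:
  assumes "finite V" and "W \<subseteq> V"
  shows "card (V \<inter> A) = card (W \<inter> A) + card ((V - W) \<inter> A)"
    and "card (V - A) = card (W - A) + card (V - W - A)"
proof -
  have "V \<inter> A \<inter> W = W \<inter> A" "V \<inter> A - W = (V - W) \<inter> A" "(V - A) \<inter> W = W - A"
    "V - A - W = V - W - A"
    using assms(2) by auto
  then show "card (V \<inter> A) = card (W \<inter> A) + card ((V - W) \<inter> A)"
    "card (V - A) = card (W - A) + card (V - W - A)"
    using card_Int_Diff[of "V \<inter> A" W] card_Int_Diff[of "V - A" W] assms(1) by simp_all
qed

text \<open>Delete vertices of small degree one by one; once there are none, split off the vertex set of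
  a longest \<open>A\<close>-path.\<close>
theorem degree_sum_le_if_no_long_A_path:
  assumes "finite V" and sym: "\<And>x y. h x y \<Longrightarrow> h y x" and irrefl: "\<And>x. \<not> h x x"
    and edges_meet_A: "\<And>x y. h x y \<Longrightarrow> x \<in> A \<or> y \<in> A"
    and "\<And>ps. A_path h V A ps \<Longrightarrow> length ps < 2 * k"
  shows "degree_sum h V \<le> 2 * (k - 1) * card (V \<inter> A) + 2 * k * card (V - A)"
  using assms(1,5)
proof (induction "card V" arbitrary: V rule: less_induct)
  case less
  note fin = less.prems(1) and short = less.prems(2)
  have IH: "degree_sum h (V - W) \<le> 2 * (k - 1) * card ((V - W) \<inter> A) + 2 * k * card (V - W - A)"
    if "W \<subseteq> V" "W \<noteq> {}" for W
  proof (rule less.hyps)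
    have "V - W \<subset> V"
      using that by blast
    then show "card (V - W) < card V"
      by (rule psubset_card_mono[OF fin])
    show "length ps < 2 * k" if "A_path h (V - W) A ps" for ps
      using short[OF A_path_mono[OF that Diff_subset]] .
  qed (use fin in simp)
  note card_split = card_Int_Diff_split[OF fin]
  consider (low) v where "v \<in> V" "v \<in> A \<and> degree_in h V v \<le> k - 1 \<or> v \<notin> A \<and> degree_in h V v \<le> k"
    | (high) "\<And>x. x \<in> V \<Longrightarrow> x \<in> A \<Longrightarrow> k \<le> degree_in h V x"
      "\<And>x. x \<in> V \<Longrightarrow> x \<notin> A \<Longrightarrow> k + 1 \<le> degree_in h V x"
    by force
  then show ?case
  proof cases
    case low
    then have "degree_sum h V = degree_sum h (V - {v}) + 2 * degree_in h V v"
      using fin sym irrefl by (intro degree_sum_remove)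
    moreover have "card ({v} \<inter> A) + card ({v} - A) = 1"
      by (cases "v \<in> A") (simp_all add: insert_Diff_if)
    ultimately show ?thesis
      using IH[of "{v}"] card_split[of "{v}"] low
      by (cases "v \<in> A") (simp_all add: distrib_left)
  next
    case high
    show ?thesis
    proof (cases "V \<inter> A = {}")
      case True
      have "degree_in h V x = 0" if "x \<in> V" for x
      proof -
        have "{y \<in> V. h x y} = {}"
          using that True edges_meet_A by blast
        then show ?thesis
          unfolding degree_in_def by (simp only: card.empty)
      qed
      then show ?thesis
        by (simp add: degree_sum_def)
    next
      case False
      then obtain W where W: "W \<subseteq> V" "W \<noteq> {}" "card W < 2 * k"
        "degree_sum h V = degree_sum h W + degree_sum h (V - W)"
        using longest_A_path_splits_off[OF fin sym irrefl edges_meet_A high short] by blast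
      have "degree_sum h W \<le> 2 * (k - 1) * card (W \<inter> A) + 2 * k * card (W - A)"
        using W fin irrefl edges_meet_A by (intro degree_sum_le_small) (auto intro: finite_subset)
      then show ?thesis
        using W(4) IH[OF W(1,2)] card_split[OF W(1)] by (simp add: algebra_simps)
    qed
  qed
qed

section \<open>Degree sums over a neighbourhood\<close>

lemma contains_cycle_if_path:
  assumes ts: "ts \<noteq> []" "successively E ts" "distinct (u # ts)"
    and ends: "E u (hd ts)" "E (last ts) u"
  shows "contains_cycle E (Suc (length ts))"
  unfolding contains_cycle_def
proof (intro exI conjI allI impI)
  fix i
  assume i: "i < Suc (length ts)"
  consider "i = 0" | i' where "i = Suc i'" "Suc i' < length ts" | "i = length ts"
    using i by (cases i) fastforce+
  then show "E ((u # ts) ! i) ((u # ts) ! ((i + 1) mod Suc (length ts)))"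
    by cases (use ts ends successively_nth[OF ts(2)] in \<open>auto simp: hd_conv_nth last_conv_nth\<close>)
qed (use ts(3) in auto)

lemma no_long_A_path_in_neighbourhood:
  assumes E: "simple_graph E" and k: "1 \<le> k" and no_cycle: "\<not> contains_cycle E (2 * k + 1)"
    and P: "A_path (\<lambda>x y. E x y \<and> E u x \<and> E u y) {v. E u v} {v. E u v} ps"
  shows "length ps < 2 * k"
proof (rule ccontr)
  assume "\<not> length ps < 2 * k"
  define ts where "ts = take (2 * k) ps"
  have ps: "ps \<noteq> []" "distinct ps" "set ps \<subseteq> {v. E u v}" "successively E ps"
    using P by (auto simp: A_path_def intro: successively_mono)
  have "ts \<noteq> []" "length ts = 2 * k"
    using ps(1) k \<open>\<not> length ps < 2 * k\<close> by (simp_all add: ts_def)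
  moreover have "successively E ts"
    using ps(4) by (simp add: ts_def successively_take)
  moreover have "set ts \<subseteq> {v. E u v}"
    using ps(3) by (auto simp: ts_def dest: in_set_takeD)
  moreover have "u \<notin> {v. E u v}"
    using E by (simp add: simple_graph_def)
  moreover have "distinct ts"
    using ps(2) by (simp add: ts_def)
  ultimately have "contains_cycle E (Suc (length ts))"
    using E by (intro contains_cycle_if_path) (auto simp: simple_graph_def subset_iff)
  then show False
    using no_cycle \<open>length ts = 2 * k\<close> by simp
qed

lemma no_long_A_path_avoiding_centre:
  assumes E: "simple_graph E" and k: "1 \<le> k"
    and no_cycle: "\<not> contains_cycle E (2 * k + 1)" "\<not> contains_cycle E (2 * k + 2)"
    and P: "A_path (\<lambda>x y. E x y \<and> (E u x \<or> E u y)) (UNIV - {u}) {v. E u v} ps"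
  shows "length ps < 2 * k"
proof (rule ccontr)
  assume long: "\<not> length ps < 2 * k"
  have ps: "ps \<noteq> []" "distinct ps" "u \<notin> set ps" "E u (hd ps)" "E u (last ps)"
    using P by (auto simp: A_path_def)
  have walk: "successively (\<lambda>x y. E x y \<and> (E u x \<or> E u y)) ps"
    using P by (simp add: A_path_def)
  then have "successively E ps"
    by (rule successively_mono) simp
  have cycle: "contains_cycle E (Suc m)" if m: "1 \<le> m" "m \<le> length ps" "E u (ps ! (m - 1))" for m
  proof -
    define ts where "ts = take m ps"
    have "ts \<noteq> []" "length ts = m" "hd ts = hd ps" "last ts = ps ! (m - 1)"
      using m ps(1) by (auto simp: ts_def last_conv_nth)
    moreover have "successively E ts" "distinct (u # ts)"
      using \<open>successively E ps\<close> ps(2,3) by (auto simp: ts_def successively_take dest: in_set_takeD)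
    ultimately show ?thesis
      using m(3) ps(4) E by (metis contains_cycle_if_path simple_graph_def)
  qed
  show False
  proof (cases "E u (ps ! (2 * k - 1))")
    case True
    then show False
      using cycle[of "2 * k"] k long no_cycle(1) by simp
  next
    case False
    have "length ps \<noteq> 2 * k"
      using False ps(1,5) by (metis last_conv_nth)
    then have "Suc (2 * k - 1) < length ps"
      using long k by simp
    then have "E u (ps ! (2 * k))"
      using successively_nth[OF walk] False k by fastforce
    then show False
      using cycle[of "2 * k + 1"] \<open>Suc (2 * k - 1) < length ps\<close> k no_cycle(2) by simp
  qed
qed

lemma sum_card_adjacent_swap:
  assumes sym: "\<And>x y. E x y \<Longrightarrow> E y x" and "finite S" "finite T"
  shows "(\<Sum>x\<in>S. card {y \<in> T. E x y}) = (\<Sum>y\<in>T. card {x \<in> S. E y x})"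
proof -
  have card_eq: "card {y \<in> T. E x y} = (\<Sum>y\<in>T. if E x y then 1 else 0)" if "finite T"
    for x and T :: "'a set"
    using that by (simp add: sum.If_cases Int_def)
  have "(\<Sum>x\<in>S. card {y \<in> T. E x y}) = (\<Sum>x\<in>S. \<Sum>y\<in>T. if E x y then 1 else 0)"
    using assms(3) by (simp add: card_eq)
  also have "\<dots> = (\<Sum>y\<in>T. \<Sum>x\<in>S. if E x y then 1 else 0)"
    by (rule sum.swap)
  also have "\<dots> = (\<Sum>y\<in>T. \<Sum>x\<in>S. if E y x then 1 else 0)"
    by (intro sum.cong refl) (metis sym)
  also have "\<dots> = (\<Sum>y\<in>T. card {x \<in> S. E y x})"
    using assms(2) by (simp add: card_eq)
  finally show ?thesis .
qed

text \<open>An edge at a neighbour of \<open>u\<close> is an edge to \<open>u\<close>, lies inside \<open>N\<close>, or joins \<open>N\<close> to the rest of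
  \<open>G - u\<close>; each of the two degree sums counts the second kind twice, and the second sum also
  counts the third kind twice.\<close>
lemma neighbourhood_degree_sum_eq:
  fixes E :: "'a::finite \<Rightarrow> 'a \<Rightarrow> bool" and u :: 'a
  assumes E: "simple_graph E"
  defines "N \<equiv> {v. E u v}"
  shows "2 * (\<Sum>v\<in>N. card {w. E v w})
    = 2 * card N + degree_sum (\<lambda>x y. E x y \<and> E u x \<and> E u y) N
      + degree_sum (\<lambda>x y. E x y \<and> (E u x \<or> E u y)) (UNIV - {u})"
proof -
  have sym: "\<And>x y. E x y \<Longrightarrow> E y x" and irrefl: "\<And>x. \<not> E x x"
    using E by (auto simp: simple_graph_def)
  define R where "R = UNIV - {u} - N"
  define inner where "inner x = card {y \<in> N. E x y}" for x
  define outer where "outer x = card {y \<in> R. E x y}" for x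
  have u_N: "u \<notin> N"
    using irrefl by (simp add: N_def)
  have inner_outer: "card ({y \<in> N. E x y} \<union> {y \<in> R. E x y}) = inner x + outer x" for x
    unfolding inner_def outer_def by (rule card_Un_disjoint) (auto simp: R_def)
  have degree: "card {w. E v w} = 1 + inner v + outer v" if "v \<in> N" for v
  proof -
    have "{w. E v w} = insert u ({y \<in> N. E v y} \<union> {y \<in> R. E v y})"
      using that sym by (auto simp: N_def R_def)
    moreover have "u \<notin> {y \<in> N. E v y} \<union> {y \<in> R. E v y}"
      using u_N by (simp add: R_def)
    ultimately show ?thesis
      using inner_outer by simp
  qed
  have "degree_sum (\<lambda>x y. E x y \<and> E u x \<and> E u y) N = (\<Sum>x\<in>N. inner x)"
    unfolding degree_sum_def degree_in_def inner_def
    by (intro sum.cong refl arg_cong[where f = card]) (auto simp: N_def)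
  moreover have "degree_sum (\<lambda>x y. E x y \<and> (E u x \<or> E u y)) (UNIV - {u})
      = (\<Sum>x\<in>N. inner x + outer x) + (\<Sum>x\<in>R. inner x)"
  proof -
    have "UNIV - {u} = N \<union> R" "N \<inter> R = {}"
      using u_N by (auto simp: R_def)
    moreover have "degree_in (\<lambda>x y. E x y \<and> (E u x \<or> E u y)) (N \<union> R) x = inner x + outer x"
      if "x \<in> N" for x
    proof -
      have "{y \<in> N \<union> R. E x y \<and> (E u x \<or> E u y)} = {y \<in> N. E x y} \<union> {y \<in> R. E x y}"
        using that by (auto simp: N_def)
      then show ?thesis
        using inner_outer by (simp add: degree_in_def)
    qed
    moreover have "degree_in (\<lambda>x y. E x y \<and> (E u x \<or> E u y)) (N \<union> R) x = inner x"
      if "x \<in> R" for x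
      unfolding degree_in_def inner_def
      by (rule arg_cong[where f = card]) (use that in \<open>auto simp: N_def R_def\<close>)
    ultimately show ?thesis
      unfolding degree_sum_def by (simp add: sum.union_disjoint)
  qed
  moreover have "(\<Sum>x\<in>R. inner x) = (\<Sum>x\<in>N. outer x)"
    unfolding inner_def outer_def by (rule sum_card_adjacent_swap[OF sym]) auto
  moreover have "(\<Sum>v\<in>N. card {w. E v w}) = (\<Sum>v\<in>N. 1 + inner v + outer v)"
    using degree by (rule sum.cong[OF refl])
  then have "(\<Sum>v\<in>N. card {w. E v w}) = card N + sum inner N + sum outer N"
    by (simp only: sum.distrib) simp
  ultimately show ?thesis
    by (simp add: sum.distrib)
qed

theorem neighbourhood_degree_sum_le:
  fixes E :: "'a::finite \<Rightarrow> 'a \<Rightarrow> bool"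
  assumes E: "simple_graph E" and k: "1 \<le> k"
    and no_cycle: "\<not> contains_cycle E (2 * k + 1)" "\<not> contains_cycle E (2 * k + 2)"
  shows "(\<Sum>v\<in>{v. E u v}. card {w. E v w}) \<le> (k - 1) * card {v. E u v} + k * (CARD('a) - 1)"
proof -
  define N where "N = {v. E u v}"
  define R where "R = UNIV - {u} - N"
  have sym: "\<And>x y. E x y \<Longrightarrow> E y x" and irrefl: "\<And>x. \<not> E x x"
    using E by (auto simp: simple_graph_def)
  have card_NR: "card N + card R = CARD('a) - 1"
  proof -
    have "UNIV - {u} = N \<union> R" "N \<inter> R = {}"
      using irrefl by (auto simp: N_def R_def)
    then show ?thesis
      by (metis card_Diff_singleton card_Un_disjoint finite UNIV_I)
  qed
  have "degree_sum (\<lambda>x y. E x y \<and> E u x \<and> E u y) N \<le> 2 * (k - 1) * card (N \<inter> N) + 2 * k * card (N - N)"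
    using no_long_A_path_in_neighbourhood[OF E k no_cycle(1)] sym irrefl
    by (intro degree_sum_le_if_no_long_A_path) (auto simp: N_def)
  moreover have "degree_sum (\<lambda>x y. E x y \<and> (E u x \<or> E u y)) (UNIV - {u})
      \<le> 2 * (k - 1) * card ((UNIV - {u}) \<inter> N) + 2 * k * card (UNIV - {u} - N)"
    using no_long_A_path_avoiding_centre[OF E k no_cycle] sym irrefl
    by (intro degree_sum_le_if_no_long_A_path) (auto simp: N_def)
  moreover have "(UNIV - {u}) \<inter> N = N"
    using irrefl by (auto simp: N_def)
  moreover obtain K where "k = Suc K"
    using k by (cases k) auto
  ultimately have "(\<Sum>v\<in>N. card {w. E v w}) \<le> (k - 1) * card N + k * (CARD('a) - 1)"
    using neighbourhood_degree_sum_eq[OF E, of u]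
    unfolding N_def[symmetric] R_def[symmetric] card_NR[symmetric] by (simp add: algebra_simps)
  then show ?thesis
    by (simp only: N_def)
qed

section \<open>Largest eigenvalue of a symmetric nonnegative matrix\<close>

lemma symmetric_matrix_inner_commute:
  fixes A :: "real^'n^'n"
  assumes "transpose A = A"
  shows "x \<bullet> (A *v y) = (A *v x) \<bullet> y"
  by (metis assms dot_lmul_matrix transpose_matrix_vector)

lemma linear_coeff_eq_0_if_quadratic_nonneg:
  fixes c d :: real
  assumes "\<And>t. 0 \<le> 2 * t * c + t\<^sup>2 * d"
  shows "c = 0"
proof (rule ccontr)
  assume "c \<noteq> 0"
  define D where "D = \<bar>d\<bar> + 1"
  define t where "t = - c / D"
  have D: "0 < D" "\<bar>d\<bar> < D"
    by (simp_all add: D_def)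
  have "t\<^sup>2 * d \<le> c\<^sup>2 * \<bar>d\<bar> / D\<^sup>2"
    by (simp add: t_def power_divide divide_right_mono mult_left_mono)
  also have "\<dots> \<le> c\<^sup>2 * D / D\<^sup>2"
    using D by (intro divide_right_mono mult_left_mono) auto
  also have "\<dots> = c\<^sup>2 / D"
    by (simp add: power2_eq_square)
  finally have "2 * t * c + t\<^sup>2 * d \<le> - c\<^sup>2 / D"
    by (simp add: t_def power2_eq_square field_simps)
  moreover have "0 < c\<^sup>2 / D"
    using \<open>c \<noteq> 0\<close> D by simp
  ultimately show False
    using assms[of t] by linarith
qed

lemma symmetric_matrix_quadratic_form_add:
  fixes A :: "real^'n^'n"
  assumes "transpose A = A"
  shows "(x + y) \<bullet> (A *v (x + y)) = x \<bullet> (A *v x) + 2 * (y \<bullet> (A *v x)) + y \<bullet> (A *v y)"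
  using symmetric_matrix_inner_commute[OF assms, of x y]
  by (simp add: matrix_vector_right_distrib inner_add_left inner_add_right inner_commute)

lemma Rayleigh_bound_imp_eigenvector:
  fixes A :: "real^'n^'n"
  assumes sym: "transpose A = A"
    and bound: "\<And>x. x \<bullet> (A *v x) \<le> \<rho> * (x \<bullet> x)"
    and attained: "z \<bullet> (A *v z) = \<rho> * (z \<bullet> z)"
  shows "A *v z = \<rho> *\<^sub>R z"
proof -
  define e where "e = \<rho> *\<^sub>R z - A *v z"
  \<comment> \<open>\<open>x \<mapsto> \<rho> (x \<bullet> x) - x \<bullet> A x\<close> is a positive semidefinite form vanishing at \<open>z\<close>\<close>
  have "0 \<le> 2 * t * (e \<bullet> e) + t\<^sup>2 * (\<rho> * (e \<bullet> e) - e \<bullet> (A *v e))" for t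
  proof -
    have "e \<bullet> (A *v z) = \<rho> * (z \<bullet> e) - e \<bullet> e"
      by (simp add: e_def inner_commute algebra_simps)
    then have "(z + t *\<^sub>R e) \<bullet> (A *v (z + t *\<^sub>R e))
        = \<rho> * (z \<bullet> z) + 2 * t * (\<rho> * (z \<bullet> e) - e \<bullet> e) + t\<^sup>2 * (e \<bullet> (A *v e))"
      using attained
      by (simp add: symmetric_matrix_quadratic_form_add[OF sym] matrix_vector_mult_scaleR power2_eq_square)
    moreover have "(z + t *\<^sub>R e) \<bullet> (z + t *\<^sub>R e) = z \<bullet> z + 2 * t * (z \<bullet> e) + t\<^sup>2 * (e \<bullet> e)"
      by (simp add: inner_add_left inner_add_right inner_commute power2_eq_square)
    ultimately show ?thesis
      using bound[of "z + t *\<^sub>R e"] by (simp add: algebra_simps)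
  qed
  then have "e \<bullet> e = 0"
    by (rule linear_coeff_eq_0_if_quadratic_nonneg)
  then show ?thesis
    by (simp add: e_def)
qed

lemma inner_matrix_vector_mult:
  fixes A :: "real^'n^'n"
  shows "x \<bullet> (A *v y) = (\<Sum>i\<in>UNIV. \<Sum>j\<in>UNIV. x $ i * A $ i $ j * y $ j)"
  by (simp add: inner_vec_def matrix_vector_mult_def sum_distrib_left mult.assoc)

lemma nonneg_matrix_quadratic_form_le_abs:
  fixes A :: "real^'n^'n"
  assumes "\<And>i j. 0 \<le> A $ i $ j"
  shows "x \<bullet> (A *v x) \<le> (\<chi> i. \<bar>x $ i\<bar>) \<bullet> (A *v (\<chi> i. \<bar>x $ i\<bar>))"
  unfolding inner_matrix_vector_mult
proof (intro sum_mono)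
  fix i j
  have "x $ i * x $ j \<le> \<bar>x $ i\<bar> * \<bar>x $ j\<bar>"
    by (metis abs_ge_self abs_mult)
  then have "x $ i * x $ j * A $ i $ j \<le> \<bar>x $ i\<bar> * \<bar>x $ j\<bar> * A $ i $ j"
    using assms by (rule mult_right_mono)
  then show "x $ i * A $ i $ j * x $ j \<le> (\<chi> i. \<bar>x $ i\<bar>) $ i * A $ i $ j * (\<chi> i. \<bar>x $ i\<bar>) $ j"
    by (simp add: ac_simps)
qed

lemma symmetric_nonneg_matrix_Perron_vector:
  fixes A :: "real^'n^'n"
  assumes sym: "transpose A = A" and nonneg: "\<And>i j. 0 \<le> A $ i $ j"
  obtains z \<rho> where "\<And>i. 0 \<le> z $ i" "z \<noteq> 0" "A *v z = \<rho> *\<^sub>R z"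
    "\<And>x. x \<bullet> (A *v x) \<le> \<rho> * (x \<bullet> x)"
proof -
  have "continuous_on (sphere 0 1) (\<lambda>x::real^'n. x \<bullet> (A *v x))"
    by (intro continuous_intros)
  moreover have "sphere (0::real^'n) 1 \<noteq> {}"
    by simp
  ultimately obtain y where y: "y \<in> sphere 0 1"
    and y_max: "\<And>x. x \<in> sphere 0 1 \<Longrightarrow> x \<bullet> (A *v x) \<le> y \<bullet> (A *v y)"
    using continuous_attains_sup[OF compact_sphere] by blast
  define z where "z = (\<chi> i. \<bar>y $ i\<bar>)"
  define \<rho> where "\<rho> = z \<bullet> (A *v z)"
  have "z \<bullet> z = y \<bullet> y"
    by (simp add: z_def inner_vec_def)
  then have zz: "z \<bullet> z = 1"
    using y by (simp add: dot_square_norm)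
  have y_le: "y \<bullet> (A *v y) \<le> \<rho>"
    unfolding \<rho>_def z_def by (rule nonneg_matrix_quadratic_form_le_abs[OF nonneg])
  have bound: "x \<bullet> (A *v x) \<le> \<rho> * (x \<bullet> x)" for x
  proof (cases "x = 0")
    case False
    define x' where "x' = (1 / norm x) *\<^sub>R x"
    have "x' \<in> sphere 0 1"
      using False by (simp add: x'_def)
    then have "x' \<bullet> (A *v x') \<le> \<rho>"
      using y_max y_le by fastforce
    moreover have "x' \<bullet> (A *v x') = (x \<bullet> (A *v x)) / (x \<bullet> x)"
      by (simp add: x'_def matrix_vector_mult_scaleR dot_square_norm power2_eq_square)
    ultimately show ?thesis
      using False by (simp add: divide_le_eq)
  qed simp
  have "A *v z = \<rho> *\<^sub>R z"
    by (rule Rayleigh_bound_imp_eigenvector[OF sym bound]) (simp add: \<rho>_def zz)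
  moreover have "z \<noteq> 0"
    using zz by auto
  moreover have "0 \<le> z $ i" for i
    by (simp add: z_def)
  ultimately show thesis
    using that bound by blast
qed

lemma eigenvalue_le_if_Rayleigh_bound:
  fixes A :: "real^'n^'n"
  assumes "\<And>x. x \<bullet> (A *v x) \<le> \<rho> * (x \<bullet> x)" and "is_eigenvalue A l"
  shows "l \<le> \<rho>"
proof -
  obtain x where "x \<noteq> 0" "A *v x = l *\<^sub>R x"
    using assms(2) by (auto simp: is_eigenvalue_def)
  then have "l * (x \<bullet> x) \<le> \<rho> * (x \<bullet> x)" and "0 < x \<bullet> x"
    using assms(1)[of x] by auto
  then show ?thesis
    by simp
qed

lemma symmetric_matrix_eigenvectors_orthogonal:
  fixes A :: "real^'n^'n"
  assumes "transpose A = A" "A *v x = l *\<^sub>R x" "A *v y = m *\<^sub>R y" "l \<noteq> m"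
  shows "x \<bullet> y = 0"
proof -
  have "m * (x \<bullet> y) = l * (x \<bullet> y)"
    using symmetric_matrix_inner_commute[OF assms(1), of x y] assms(2,3) by simp
  then show ?thesis
    using assms(4) by simp
qed

lemma finite_eigenvalues_symmetric_matrix:
  fixes A :: "real^'n^'n"
  assumes sym: "transpose A = A"
  shows "finite {l. is_eigenvalue A l}"
proof (rule ccontr)
  assume "infinite {l. is_eigenvalue A l}"
  then obtain T where T: "finite T" "card T = CARD('n) + 1" "T \<subseteq> {l. is_eigenvalue A l}"
    by (meson infinite_arbitrarily_large)
  define v where "v l = (SOME x. x \<noteq> 0 \<and> A *v x = l *\<^sub>R x)" for l
  have v: "v l \<noteq> 0 \<and> A *v v l = l *\<^sub>R v l" if "l \<in> T" for l
  proof -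
    have "\<exists>x. x \<noteq> 0 \<and> A *v x = l *\<^sub>R x"
      using T(3) that by (auto simp: is_eigenvalue_def)
    then show ?thesis
      unfolding v_def by (rule someI_ex)
  qed
  have "inj_on v T"
  proof (rule inj_onI)
    fix l m
    assume "l \<in> T" "m \<in> T" "v l = v m"
    then have "l *\<^sub>R v l = m *\<^sub>R v l" and "v l \<noteq> 0"
      using v by metis+
    then show "l = m"
      by simp
  qed
  moreover have "pairwise orthogonal (v ` T)"
    unfolding pairwise_def orthogonal_def
  proof clarify
    fix l m
    assume lm: "l \<in> T" "m \<in> T" "v l \<noteq> v m"
    show "v l \<bullet> v m = 0"
      by (rule symmetric_matrix_eigenvectors_orthogonal[OF sym]) (use v lm in auto)
  qed
  then have "independent (v ` T)"
    by (rule pairwise_orthogonal_independent) (use v in auto)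
  then have "card (v ` T) \<le> CARD('n)"
    using independent_bound by fastforce
  ultimately show False
    using T(2) by (simp add: card_image)
qed

lemma symmetric_nonneg_matrix_Max_eigenvector:
  fixes A :: "real^'n^'n"
  assumes sym: "transpose A = A" and nonneg: "\<And>i j. 0 \<le> A $ i $ j"
  obtains z where "\<And>i. 0 \<le> z $ i" "z \<noteq> 0" "A *v z = Max {l. is_eigenvalue A l} *\<^sub>R z"
proof -
  obtain z \<rho> where z: "\<And>i. 0 \<le> z $ i" "z \<noteq> 0" "A *v z = \<rho> *\<^sub>R z"
    and bound: "\<And>x. x \<bullet> (A *v x) \<le> \<rho> * (x \<bullet> x)"
    using symmetric_nonneg_matrix_Perron_vector[OF sym nonneg] by blast
  have "is_eigenvalue A \<rho>"
    using z by (auto simp: is_eigenvalue_def)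
  then have "Max {l. is_eigenvalue A l} = \<rho>"
    using eigenvalue_le_if_Rayleigh_bound[OF bound] finite_eigenvalues_symmetric_matrix[OF sym]
    by (intro Max_eqI) auto
  then show thesis
    using that[OF z(1,2)] z(3) by simp
qed

lemma symmetric_nonneg_matrix_Max_eigenvalue_bound:
  fixes A :: "real^'n^'n"
  assumes sym: "transpose A = A" and nonneg: "\<And>i j. 0 \<le> A $ i $ j"
    and square_ones: "\<And>i. (A *v (A *v 1)) $ i \<le> \<alpha> * (A *v 1) $ i + \<beta>"
  shows "(Max {l. is_eigenvalue A l})\<^sup>2 - \<alpha> * Max {l. is_eigenvalue A l} \<le> \<beta>"
proof -
  define \<rho> where "\<rho> = Max {l. is_eigenvalue A l}"
  obtain z where z: "\<And>i. 0 \<le> z $ i" "z \<noteq> 0" "A *v z = \<rho> *\<^sub>R z"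
    using symmetric_nonneg_matrix_Max_eigenvector[OF sym nonneg] unfolding \<rho>_def by blast
  have Az: "w \<bullet> (\<rho> *\<^sub>R z) = (A *v w) \<bullet> z" for w
    using symmetric_matrix_inner_commute[OF sym, of w z] z(3) by simp
  have "\<rho> * (1 \<bullet> z) = (A *v 1) \<bullet> z"
    using Az[of 1] by simp
  moreover have "\<rho>\<^sup>2 * (1 \<bullet> z) = (A *v (A *v 1)) \<bullet> z"
    using Az[of "A *v 1"] by (simp add: power2_eq_square flip: \<open>\<rho> * (1 \<bullet> z) = (A *v 1) \<bullet> z\<close>)
  moreover have "(A *v (A *v 1)) \<bullet> z \<le> (\<alpha> *\<^sub>R (A *v 1) + \<beta> *\<^sub>R 1) \<bullet> z"
    unfolding inner_vec_def using square_ones z(1) by (intro sum_mono) (simp add: mult_right_mono)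
  moreover have "0 < 1 \<bullet> z"
  proof -
    obtain i where "z $ i \<noteq> 0"
      using z(2) by (metis vec_eq_iff zero_index)
    then have "0 < z $ i"
      using z(1)[of i] by simp
    then show ?thesis
      unfolding inner_vec_def using z(1) by (intro sum_pos2[of UNIV i]) auto
  qed
  moreover have "(\<alpha> *\<^sub>R (A *v 1) + \<beta> *\<^sub>R 1) \<bullet> z = \<alpha> * ((A *v 1) \<bullet> z) + \<beta> * (1 \<bullet> z)"
    by (simp add: inner_add_left)
  moreover have "\<alpha> * \<rho> * (1 \<bullet> z) = \<alpha> * ((A *v 1) \<bullet> z)"
    by (simp add: mult.assoc \<open>\<rho> * (1 \<bullet> z) = (A *v 1) \<bullet> z\<close>)
  ultimately have "(\<rho>\<^sup>2 - \<alpha> * \<rho>) * (1 \<bullet> z) \<le> \<beta> * (1 \<bullet> z)"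
    unfolding left_diff_distrib by linarith
  then show ?thesis
    using \<open>0 < 1 \<bullet> z\<close> by (simp add: \<rho>_def)
qed

section \<open>The spectral condition\<close>

lemma adj_matrix_symmetric: "simple_graph E \<Longrightarrow> transpose (adj_matrix E) = adj_matrix E"
  by (auto simp: simple_graph_def adj_matrix_def transpose_def vec_eq_iff)

lemma adj_matrix_nonneg: "0 \<le> adj_matrix E $ i $ j"
  by (simp add: adj_matrix_def)

lemma adj_matrix_mult_nth: "(adj_matrix E *v y) $ u = (\<Sum>v\<in>{v. E u v}. y $ v)"
proof -
  have "(\<Sum>v\<in>{v \<in> UNIV. E u v}. y $ v) = (\<Sum>v\<in>UNIV. if E u v then y $ v else 0)"
    by (rule sum.inter_filter) simp
  moreover have "(if E u v then 1 else 0) * y $ v = (if E u v then y $ v else 0)" for v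
    by simp
  ultimately show ?thesis
    by (simp add: adj_matrix_def matrix_vector_mult_def)
qed

lemma adj_matrix_square_ones_le:
  fixes E :: "'a::finite \<Rightarrow> 'a \<Rightarrow> bool"
  assumes E: "simple_graph E" and k: "1 \<le> k"
    and no_cycle: "\<not> contains_cycle E (2 * k + 1)" "\<not> contains_cycle E (2 * k + 2)"
  shows "(adj_matrix E *v (adj_matrix E *v 1)) $ u
    \<le> (real k - 1) * (adj_matrix E *v 1) $ u + real k * (real CARD('a) - 1)"
proof -
  have "real (\<Sum>v\<in>{v. E u v}. card {w. E v w})
      \<le> real ((k - 1) * card {v. E u v} + k * (CARD('a) - 1))"
    using neighbourhood_degree_sum_le[OF E k no_cycle] by (simp only: of_nat_le_iff)
  then show ?thesis
    using k by (simp add: adj_matrix_mult_nth)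
qed

lemma quadratic_gt_if_gt_root:
  fixes a b x :: real
  assumes "0 \<le> b + a\<^sup>2 / 4" and "x > a / 2 + sqrt (b + a\<^sup>2 / 4)"
  shows "x\<^sup>2 - a * x > b"
proof -
  have "sqrt (b + a\<^sup>2 / 4) < x - a / 2"
    using assms(2) by simp
  then have "b + a\<^sup>2 / 4 < (x - a / 2)\<^sup>2"
    using assms(1) by (metis real_sqrt_ge_zero real_sqrt_pow2 power_strict_mono zero_less_numeral)
  then show ?thesis
    by (simp add: power2_eq_square algebra_simps)
qed

theorem theorem3:
  fixes E :: "'a::finite \<Rightarrow> 'a \<Rightarrow> bool" and k n :: nat
  assumes "simple_graph E"
    and "k \<ge> 1"
    and "n = CARD('a)"
    and "spectral_radius_graph E >
           (real k - 1) / 2 + sqrt (real k * real n + (real k + 1)^2 / 4)"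
  shows "contains_cycle E (2*k+1) \<or> contains_cycle E (2*k+2)"
proof (rule ccontr)
  assume "\<not> ?thesis"
  then have "(adj_matrix E *v (adj_matrix E *v 1)) $ u
      \<le> (real k - 1) * (adj_matrix E *v 1) $ u + real k * (real n - 1)" for u
    using adj_matrix_square_ones_le[OF assms(1,2)] assms(3) by blast
  then have "(spectral_radius_graph E)\<^sup>2 - (real k - 1) * spectral_radius_graph E \<le> real k * (real n - 1)"
    unfolding spectral_radius_graph_def
    by (intro symmetric_nonneg_matrix_Max_eigenvalue_bound adj_matrix_symmetric assms(1) adj_matrix_nonneg)
  moreover have "real k * real n + (real k + 1)\<^sup>2 / 4 = (real k * real n + real k) + (real k - 1)\<^sup>2 / 4"
    by (simp add: power2_eq_square field_simps)
  then have "spectral_radius_graph E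
      > (real k - 1) / 2 + sqrt ((real k * real n + real k) + (real k - 1)\<^sup>2 / 4)"
    using assms(4) by metis
  then have "(spectral_radius_graph E)\<^sup>2 - (real k - 1) * spectral_radius_graph E > real k * real n + real k"
    by (intro quadratic_gt_if_gt_root) simp_all
  ultimately show False
    by (simp add: algebra_simps)
qed

end
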